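(* In base $B=3$, for every $\eta\ge 2$, $$\gamma_3(\eta+1)=2\cdot 3^{\frac{\gamma_3(\eta)-1}{4}}-1,$$ where $\gamma_3(2)=13=(1,1,1)_3$ (so that $\gamma_3(3)=2\cdot3^3-1$).
   Context: Every integer $x>0$ is written uniquely in base $3$ as $x=\sum_{i} x_i 3^i$ with digits $x_i\in\{0,1,2\}$; $(x_{L-1},\dots,x_0)_3$ denotes $x$ by its digits. Define $\mathcal{H}_3(x)=\sum_{i} x_i^2$, $\mathcal{H}_3^0(x)=x$, $\mathcal{H}_3^n=\mathcal{H}_3\circ\mathcal{H}_3^{n-1}$. A positive integer $x$ is happy if $\mathcal{H}_3^n(x)=1$ for some $n\in\mathbb{N}$; its height is $\eta_3(x)=\min\{\alpha\in\mathbb{N}:\mathcal{H}_3^\alpha(x)=1\}$. For $n\in\mathbb{N}$, $\gamma_3(n)$ denotes the smallest happy number $x\ge1$ with $\eta_3(x)=n$. *)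

theory Defs
  imports Complex_Main
begin

fun H3 :: "nat \<Rightarrow> nat" where
  "H3 x = (if x = 0 then 0 else (x mod 3)^2 + H3 (x div 3))"

definition happy3 :: "nat \<Rightarrow> bool" where
  "happy3 x \<longleftrightarrow> x > 0 \<and> (\<exists>n. (H3 ^^ n) x = 1)"

definition eta3 :: "nat \<Rightarrow> nat" where
  "eta3 x = (LEAST \<alpha>. (H3 ^^ \<alpha>) x = 1)"

definition gamma3 :: "nat \<Rightarrow> nat" where
  "gamma3 n = (LEAST x. x \<ge> 1 \<and> happy3 x \<and> eta3 x = n)"

end

theory Submission
  imports Defs
begin

text \<open>
  Each base-3 digit contributes at most 4 to \<open>H3\<close>, and \<open>2 * 3^k - 1 = (1,2,\<dots>,2)\<^sub>3\<close>
  (with \<open>k\<close> twos) is the least positive number with \<open>H3 x \<ge> 4 * k + 1\<close>, attaining equality.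
  A number has height \<open>\<eta> + 1\<close> iff its image under \<open>H3\<close> has height \<open>\<eta>\<close>, so the least
  one is the least \<open>x\<close> with \<open>H3 x \<ge> \<gamma>\<^sub>3(\<eta>)\<close>. Starting from \<open>\<gamma>\<^sub>3(2) = 13\<close>, every
  \<open>\<gamma>\<^sub>3(\<eta>)\<close> is \<open>1 mod 4\<close>, which makes this minimum exactly \<open>2 * 3^((\<gamma>\<^sub>3(\<eta>) - 1) / 4) - 1\<close>.
\<close>

declare H3.simps [simp del]

lemma H3_0 [simp]: "H3 0 = 0"
  by (simp add: H3.simps)

lemma H3_digit: "r < 3 \<Longrightarrow> H3 (3 * m + r) = r\<^sup>2 + H3 m"
  by (cases "3 * m + r = 0") (simp_all add: H3.simps[of "3 * m + r"])

lemma H3_1 [simp]: "H3 1 = 1"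
  by (simp add: H3.simps)

lemma H3_pos_iff: "0 < H3 x \<longleftrightarrow> 0 < x"
proof (induction x rule: H3.induct)
  case (1 x)
  show ?case
  proof (cases "x = 0")
    case False
    then have "H3 x = (x mod 3)\<^sup>2 + H3 (x div 3)"
      by (simp add: H3.simps[of x])
    moreover have "x mod 3 \<noteq> 0 \<or> 0 < x div 3"
      using False by presburger
    ultimately show ?thesis
      using "1.IH"[OF False] False by fastforce
  qed simp
qed

lemma two_mul_pow3_minus_one_Suc: "2 * 3 ^ Suc k - 1 = 3 * (2 * 3 ^ k - 1) + (2::nat)"
  by (cases "3 ^ k :: nat") simp_all

lemma H3_two_mul_pow3_minus_one: "H3 (2 * 3 ^ k - 1) = 4 * k + 1"
proof (induction k)
  case (Suc k)
  then show ?case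
    by (simp only: two_mul_pow3_minus_one_Suc H3_digit) simp
qed (simp add: H3.simps)

lemma two_mul_pow3_minus_one_mod_4: "(2 * 3 ^ k - 1) mod 4 = (1::nat)"
proof (induction k)
  case (Suc k)
  have "a mod 4 = 1 \<Longrightarrow> (3 * a + 2) mod 4 = 1" for a :: nat
    by presburger
  then show ?case
    unfolding two_mul_pow3_minus_one_Suc using Suc.IH .
qed simp

lemma two_mul_pow3_le_Suc_if_H3_ge:
  assumes "0 < x" and "4 * k + 1 \<le> H3 x"
  shows "2 * 3 ^ k \<le> x + 1"
  using assms
proof (induction k arbitrary: x)
  case (Suc k)
  define q r where "q = x div 3" and "r = x mod 3"
  have x: "x = 3 * q + r" and "r < 3"
    unfolding q_def r_def by simp_all
  then have H3_x: "H3 x = r\<^sup>2 + H3 q"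
    using H3_digit by simp
  have "r\<^sup>2 \<le> 2\<^sup>2"
    using \<open>r < 3\<close> by (intro power_mono) simp_all
  then have H3_q: "4 * k + 1 \<le> H3 q"
    using Suc.prems(2) H3_x by simp
  then have "0 < q"
    using H3_pos_iff[of q] by linarith
  then have IH: "2 * 3 ^ k \<le> q + 1"
    using H3_q by (rule Suc.IH)
  show ?case
  proof (cases "q + 1 = 2 * 3 ^ k")
    case True
    then have "H3 q = 4 * k + 1"
      using H3_two_mul_pow3_minus_one[of k] by (simp flip: True)
    then have "2\<^sup>2 \<le> r\<^sup>2"
      using Suc.prems(2) H3_x by simp
    then have "r = 2"
      using \<open>r < 3\<close> power2_le_imp_le[of 2 r] by simp
    with x True show ?thesis
      by simp
  next
    case False
    with IH x show ?thesis
      by simp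
  qed
qed simp

definition has_height3 :: "nat \<Rightarrow> nat \<Rightarrow> bool" where
  "has_height3 n x \<longleftrightarrow> 0 < x \<and> (H3 ^^ n) x = 1 \<and> (\<forall>j<n. (H3 ^^ j) x \<noteq> 1)"

lemma happy3_eta3_iff_has_height3:
  "x \<ge> 1 \<and> happy3 x \<and> eta3 x = n \<longleftrightarrow> has_height3 n x"
proof
  assume x: "x \<ge> 1 \<and> happy3 x \<and> eta3 x = n"
  then obtain m where "(H3 ^^ m) x = 1"
    unfolding happy3_def by blast
  then have "(H3 ^^ eta3 x) x = 1"
    unfolding eta3_def by (rule LeastI)
  moreover have "(H3 ^^ j) x \<noteq> 1" if "j < eta3 x" for j
    using that unfolding eta3_def by (rule not_less_Least)
  ultimately show "has_height3 n x"
    using x unfolding has_height3_def by auto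
next
  assume x: "has_height3 n x"
  then have "eta3 x = n"
    unfolding eta3_def has_height3_def by (intro Least_equality) (auto simp: not_less[symmetric])
  with x show "x \<ge> 1 \<and> happy3 x \<and> eta3 x = n"
    unfolding has_height3_def happy3_def by auto
qed

lemma gamma3_eq_Least_has_height3: "gamma3 n = (LEAST x. has_height3 n x)"
  unfolding gamma3_def happy3_eta3_iff_has_height3 ..

text \<open>The hypothesis \<open>n \<ge> 1\<close> excludes \<open>x = 1\<close>, a fixed point of \<open>H3\<close> of height 0.\<close>

lemma has_height3_Suc:
  assumes "n \<ge> 1"
  shows "has_height3 (Suc n) x \<longleftrightarrow> 0 < x \<and> has_height3 n (H3 x)"
proof -
  have shift: "(H3 ^^ Suc j) x = (H3 ^^ j) (H3 x)" for j
    by (simp only: funpow_Suc_right comp_def)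
  have "(\<forall>j<Suc n. (H3 ^^ j) x \<noteq> 1) \<longleftrightarrow> x \<noteq> 1 \<and> (\<forall>j<n. (H3 ^^ j) (H3 x) \<noteq> 1)"
    by (simp only: All_less_Suc2 funpow_0 shift)
  moreover have "x \<noteq> 1" if "\<forall>j<n. (H3 ^^ j) (H3 x) \<noteq> 1"
    using that[rule_format, of 0] assms H3_1 by auto
  ultimately show ?thesis
    unfolding has_height3_def shift H3_pos_iff by blast
qed

lemma has_height3_Suc_two_mul_pow3_minus_one:
  assumes "n \<ge> 1" and "has_height3 n (4 * k + 1)"
  shows "has_height3 (Suc n) (2 * 3 ^ k - 1)"
proof -
  have "(1::nat) \<le> 3 ^ k"
    by simp
  then have "0 < 2 * 3 ^ k - (1::nat)"
    by linarith
  with assms show ?thesis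
    unfolding has_height3_Suc[OF assms(1)] H3_two_mul_pow3_minus_one by blast
qed

lemma gamma3_Suc:
  assumes "n \<ge> 1" and "has_height3 n (gamma3 n)" and "gamma3 n = 4 * k + 1"
  shows "gamma3 (Suc n) = 2 * 3 ^ k - 1"
  unfolding gamma3_eq_Least_has_height3
proof (rule Least_equality)
  show "has_height3 (Suc n) (2 * 3 ^ k - 1)"
    using has_height3_Suc_two_mul_pow3_minus_one[OF assms(1)] assms(2,3) by simp
next
  fix y assume "has_height3 (Suc n) y"
  then have "0 < y" and "has_height3 n (H3 y)"
    using has_height3_Suc[OF assms(1)] by auto
  then have "gamma3 n \<le> H3 y"
    unfolding gamma3_eq_Least_has_height3 by (intro Least_le)
  then have "2 * 3 ^ k \<le> y + 1"
    using assms(3) two_mul_pow3_le_Suc_if_H3_ge[OF \<open>0 < y\<close>] by simp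
  then show "2 * 3 ^ k - 1 \<le> y"
    by simp
qed

lemma has_height3_2_iff:
  "has_height3 2 x \<longleftrightarrow> 0 < x \<and> x \<noteq> 1 \<and> H3 x \<noteq> 1 \<and> H3 (H3 x) = 1"
  unfolding has_height3_def numeral_2_eq_2 All_less_Suc by auto

lemma gamma3_2: "gamma3 2 = 13" and has_height3_2_13: "has_height3 2 13"
proof -
  show "has_height3 2 13"
    unfolding has_height3_2_iff by (simp add: H3.simps)
  moreover have "\<forall>y\<in>{..<13::nat}. y \<noteq> 1 \<and> H3 y \<noteq> 1 \<longrightarrow> H3 (H3 y) \<noteq> 1"
    by (simp add: H3.simps lessThan_nat_numeral)
  then have "13 \<le> y" if "has_height3 2 y" for y
    using that unfolding has_height3_2_iff by (meson lessThan_iff not_le)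
  ultimately show "gamma3 2 = 13"
    unfolding gamma3_eq_Least_has_height3 by (rule Least_equality)
qed

lemma has_height3_gamma3:
  assumes "n \<ge> 2"
  shows "has_height3 n (gamma3 n) \<and> gamma3 n mod 4 = 1"
  using assms
proof (induction n rule: dec_induct)
  case base
  then show ?case
    using gamma3_2 has_height3_2_13 by simp
next
  case (step n)
  then obtain k where k: "gamma3 n = 4 * k + 1"
    by (metis div_mod_decomp mult.commute)
  then have "gamma3 (Suc n) = 2 * 3 ^ k - 1"
    using step gamma3_Suc by simp
  then show ?case
    using step k has_height3_Suc_two_mul_pow3_minus_one two_mul_pow3_minus_one_mod_4 by simp
qed

theorem lemma5p1:
  shows "gamma3 2 = 13 \<and>
    (\<forall>\<eta>::nat. \<eta> \<ge> 2 \<longrightarrow>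
       real (gamma3 (\<eta> + 1)) = 2 * 3 powr ((real (gamma3 \<eta>) - 1) / 4) - 1)"
proof (intro conjI allI impI)
  show "gamma3 2 = 13"
    by (rule gamma3_2)
  fix n :: nat assume "n \<ge> 2"
  then have n: "has_height3 n (gamma3 n)" "gamma3 n mod 4 = 1"
    using has_height3_gamma3 by auto
  then obtain k where k: "gamma3 n = 4 * k + 1"
    by (metis div_mod_decomp mult.commute)
  then have "gamma3 (n + 1) = 2 * 3 ^ k - 1"
    using \<open>n \<ge> 2\<close> n gamma3_Suc by simp
  moreover have "(1::nat) \<le> 3 ^ k"
    by simp
  ultimately show "real (gamma3 (n + 1)) = 2 * 3 powr ((real (gamma3 n) - 1) / 4) - 1"
    using k by (simp add: of_nat_diff powr_realpow)
qed

end
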